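(* Let $m\ge 1$ and let $\vec f=(f_1,\dots,f_m)\in\mathbb{R}^m$ have pairwise distinct components. Define the Gibbs weights $w_\alpha:=e^{f_\alpha}/\sum_{\beta=1}^m e^{f_\beta}$, $\alpha=1,\dots,m$. Let $\delta\vec f=(\delta f_1,\dots,\delta f_m)\in\mathbb{R}^m$ be arbitrary, and regard $\vec f$ and $\delta\vec f$ as a pair of random variables with joint probability $w(f_\alpha,\delta f_\beta)=\delta_{\alpha\beta}w_\alpha$ (i.e. the index $\alpha$ is drawn with probability $w_\alpha$ and both variables take their $\alpha$-th value). Call them totally uncorrelated if for all natural numbers $u,v$ $$\sum_{\alpha=1}^m w_\alpha f_\alpha^{u}(\delta f_\alpha)^{v}-\Big(\sum_{\alpha=1}^m w_\alpha f_\alpha^{u}\Big)\Big(\sum_{\alpha=1}^m w_\alpha (\delta f_\alpha)^{v}\Big)=0.$$ Then $\vec f$ and $\delta\vec f$ are totally uncorrelated if and only if $\delta\vec f$ is proportional to $(1,\dots,1)$.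
   Context: Here $\delta_{\alpha\beta}$ is the Kronecker delta. The vector $\vec f$ represents the values $f_\alpha(\boldsymbol{x})$ of the functions defining a statistical hypersurface $x_{n+1}=\ln\sum_\alpha e^{f_\alpha(\boldsymbol{x})}$ at a point, and $\delta\vec f$ an infinitesimal variation of these values; only the finite-dimensional statement above is needed. *)

theory Defs
  imports "HOL-Analysis.Analysis"
begin

definition gibbs_weight :: "real ^ 'm \<Rightarrow> 'm \<Rightarrow> real" where
  "gibbs_weight f a = exp (f $ a) / (\<Sum>b\<in>UNIV. exp (f $ b))"

definition totally_uncorrelated :: "real ^ 'm \<Rightarrow> real ^ 'm \<Rightarrow> bool" where
  "totally_uncorrelated f df \<longleftrightarrow>
     (\<forall>u v :: nat.
        (\<Sum>a\<in>UNIV. gibbs_weight f a * (f $ a) ^ u * (df $ a) ^ v)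
        - (\<Sum>a\<in>UNIV. gibbs_weight f a * (f $ a) ^ u)
          * (\<Sum>a\<in>UNIV. gibbs_weight f a * (df $ a) ^ v) = 0)"

end

theory Submission
  imports Defs "HOL-Computational_Algebra.Polynomial"
begin

text \<open>If \<open>\<delta>f\<close> is constant the covariances vanish because the Gibbs weights sum to one.
  Conversely, the covariances with \<open>v = 1\<close> say that all power moments of the signed
  weights \<open>w\<^sub>\<alpha> (\<delta>f\<^sub>\<alpha> - E[\<delta>f])\<close> at the distinct nodes \<open>f\<^sub>\<alpha>\<close> vanish; pairing them
  with the polynomial that vanishes at all nodes but one shows that each of these weights is zero.\<close>

lemma sum_poly_eq_zero_if_power_moments_zero:
  assumes "\<And>i. (\<Sum>a\<in>A. x a ^ i * g a) = 0"
  shows "(\<Sum>a\<in>A. poly p (x a) * g a) = (0::'b::comm_semiring_1)"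
proof -
  have "(\<Sum>a\<in>A. poly p (x a) * g a) = (\<Sum>i\<le>degree p. coeff p i * (\<Sum>a\<in>A. x a ^ i * g a))"
    by (simp add: poly_altdef sum_distrib_left sum_distrib_right sum.swap[of _ A] mult.assoc)
  then show ?thesis
    by (simp add: assms)
qed

lemma power_moments_zero_imp_zero:
  fixes x g :: "'a \<Rightarrow> 'b::idom"
  assumes "finite A" and "inj_on x A"
    and "\<And>i. (\<Sum>a\<in>A. x a ^ i * g a) = 0"
    and "b \<in> A"
  shows "g b = 0"
proof -
  define p where "p = (\<Prod>c\<in>x ` (A - {b}). [:- c, 1:])"
  have poly_p: "poly p y = (\<Prod>c\<in>x ` (A - {b}). y - c)" for y
    by (simp add: p_def poly_prod)
  have "poly p (x a) = 0" if "a \<in> A - {b}" for a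
    unfolding poly_p using \<open>finite A\<close> that by (intro prod_zero) auto
  then have "(\<Sum>a\<in>A. poly p (x a) * g a) = poly p (x b) * g b"
    using \<open>finite A\<close> \<open>b \<in> A\<close> by (simp add: sum.remove)
  moreover have "poly p (x b) \<noteq> 0"
    unfolding poly_p using \<open>finite A\<close> \<open>inj_on x A\<close> \<open>b \<in> A\<close> by (auto simp: inj_on_def)
  ultimately show "g b = 0"
    using sum_poly_eq_zero_if_power_moments_zero[OF assms(3)] by simp
qed

lemma gibbs_weight_pos: "gibbs_weight f a > 0"
  unfolding gibbs_weight_def by (simp add: sum_pos)

lemma sum_gibbs_weight: "(\<Sum>a\<in>UNIV. gibbs_weight f a) = 1"
proof -
  have "(\<Sum>b\<in>UNIV. exp (f $ b)) > 0"
    by (simp add: sum_pos)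
  then show ?thesis
    by (simp add: gibbs_weight_def sum_divide_distrib[symmetric])
qed

lemma totally_uncorrelated_const:
  assumes "\<And>a. df $ a = c"
  shows "totally_uncorrelated f df"
  unfolding totally_uncorrelated_def
  by (simp add: assms sum_distrib_right[symmetric] sum_gibbs_weight)

theorem proposition3p1:
  fixes f df :: "real ^ 'm"
  assumes "inj (\<lambda>a. f $ a)"
  shows "totally_uncorrelated f df \<longleftrightarrow> (\<exists>c::real. \<forall>a. df $ a = c)"
proof
  assume uncorrelated: "totally_uncorrelated f df"
  define w where "w = gibbs_weight f"
  define E where "E = (\<Sum>a\<in>UNIV. w a * df $ a)"
  have moments: "(\<Sum>a\<in>UNIV. (f $ a) ^ i * (w a * (df $ a - E))) = 0" for i
  proof -
    have "(\<Sum>a\<in>UNIV. w a * (f $ a) ^ i * (df $ a) ^ 1)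
          - (\<Sum>a\<in>UNIV. w a * (f $ a) ^ i) * (\<Sum>a\<in>UNIV. w a * (df $ a) ^ 1) = 0"
      using uncorrelated unfolding totally_uncorrelated_def w_def by blast
    moreover have "(\<Sum>a\<in>UNIV. (f $ a) ^ i * (w a * (df $ a - E)))
        = (\<Sum>a\<in>UNIV. w a * (f $ a) ^ i * df $ a) - (\<Sum>a\<in>UNIV. w a * (f $ a) ^ i) * E"
      by (simp add: algebra_simps sum_subtractf sum_distrib_left)
    ultimately show ?thesis
      unfolding E_def by (simp only: power_one_right)
  qed
  have "w a * (df $ a - E) = 0" for a
    using power_moments_zero_imp_zero[OF _ _ moments] assms by simp
  moreover have "w a \<noteq> 0" for a
    using gibbs_weight_pos[of f a] by (simp add: w_def)
  ultimately have "df $ a = E" for a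
    by (metis eq_iff_diff_eq_0 mult_eq_0_iff)
  then show "\<exists>c. \<forall>a. df $ a = c"
    by blast
next
  assume "\<exists>c. \<forall>a. df $ a = c"
  then show "totally_uncorrelated f df"
    using totally_uncorrelated_const by blast
qed

end
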